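(* Let $k\geq 3$ be an odd integer and let $G$ be a bipartite graph. If $|V(G)|$ is odd, then $mp^{k}(G)=smp^{k}(G)=0$. If $|V(G)|$ is even, then $mp^{k}(G)=mp(G)$ and $smp^{k}(G)\leq smp(G)$.
   Context: All graphs are finite and simple; $\Gamma(v)$ is the set of edges incident with $v$. An integer $k$-matching of $G$ is a function $h:E(G)\to\{0,1,\dots,k\}$ with $\sum_{e\in\Gamma(v)}h(e)\leq k$ for all $v$; it is perfect if every vertex has $\sum_{e\in\Gamma(v)}h(e)=k$, and almost perfect if exactly one vertex $v'$ has $\sum_{e\in\Gamma(v')}h(e)=k-1$ and all other vertices have sum $k$. For $F\subseteq V(G)\cup E(G)$, $G-F$ is obtained by deleting the vertices of $F$ (with incident edges) and the edges of $F$. $mp^{k}(G)$ (resp. $smp^{k}(G)$) is the minimum size of a set $F\subseteq E(G)$ (resp. $F\subseteq V(G)\cup E(G)$) such that $G-F$ has neither a perfect nor an almost perfect integer $k$-matching. $mp(G)$ (resp. $smp(G)$) is the minimum size of a set $F\subseteq E(G)$ (resp. $F\subseteq V(G)\cup E(G)$) such that $G-F$ has neither a perfect matching nor an almost perfect matching (a matching leaving exactly one vertex unsaturated). *)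

theory Defs
  imports Main
begin

definition simple_graph :: "'a set \<Rightarrow> 'a set set \<Rightarrow> bool" where
  "simple_graph V E \<longleftrightarrow> finite V \<and> (\<forall>e\<in>E. e \<subseteq> V \<and> card e = 2)"

definition bipartite :: "'a set \<Rightarrow> 'a set set \<Rightarrow> bool" where
  "bipartite V E \<longleftrightarrow> (\<exists>A B. A \<union> B = V \<and> A \<inter> B = {} \<and>
      (\<forall>e\<in>E. card (e \<inter> A) = 1 \<and> card (e \<inter> B) = 1))"

definition inc :: "'a set set \<Rightarrow> 'a \<Rightarrow> 'a set set" where
  "inc E v = {e \<in> E. v \<in> e}"

definition int_k_matching :: "nat \<Rightarrow> 'a set \<Rightarrow> 'a set set \<Rightarrow> ('a set \<Rightarrow> nat) \<Rightarrow> bool" where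
  "int_k_matching k V E h \<longleftrightarrow> (\<forall>e\<in>E. h e \<le> k) \<and> (\<forall>v\<in>V. sum h (inc E v) \<le> k)"

definition perfect_int_k_matching :: "nat \<Rightarrow> 'a set \<Rightarrow> 'a set set \<Rightarrow> ('a set \<Rightarrow> nat) \<Rightarrow> bool" where
  "perfect_int_k_matching k V E h \<longleftrightarrow> int_k_matching k V E h \<and> (\<forall>v\<in>V. sum h (inc E v) = k)"

definition almost_perfect_int_k_matching :: "nat \<Rightarrow> 'a set \<Rightarrow> 'a set set \<Rightarrow> ('a set \<Rightarrow> nat) \<Rightarrow> bool" where
  "almost_perfect_int_k_matching k V E h \<longleftrightarrow> int_k_matching k V E h \<and>
     (\<exists>v'\<in>V. sum h (inc E v') = k - 1 \<and> (\<forall>v\<in>V - {v'}. sum h (inc E v) = k))"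

definition has_pap_k :: "nat \<Rightarrow> 'a set \<Rightarrow> 'a set set \<Rightarrow> bool" where
  "has_pap_k k V E \<longleftrightarrow> (\<exists>h. perfect_int_k_matching k V E h \<or> almost_perfect_int_k_matching k V E h)"

definition matching :: "'a set set \<Rightarrow> 'a set set \<Rightarrow> bool" where
  "matching E M \<longleftrightarrow> M \<subseteq> E \<and> (\<forall>e1\<in>M. \<forall>e2\<in>M. e1 \<noteq> e2 \<longrightarrow> e1 \<inter> e2 = {})"

definition has_pap :: "'a set \<Rightarrow> 'a set set \<Rightarrow> bool" where
  "has_pap V E \<longleftrightarrow> (\<exists>M. matching E M \<and> (\<Union>M = V \<or> card (V - \<Union>M) = 1))"

text \<open>G - F for F = FV (vertices) plus FE (edges).\<close>
definition del_edges :: "'a set \<Rightarrow> 'a set set \<Rightarrow> 'a set set \<Rightarrow> 'a set set" where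
  "del_edges FV FE E = {e \<in> E - FE. e \<inter> FV = {}}"

definition mpk :: "nat \<Rightarrow> 'a set \<Rightarrow> 'a set set \<Rightarrow> nat" where
  "mpk k V E = Inf {card F | F. F \<subseteq> E \<and> \<not> has_pap_k k V (E - F)}"

definition smpk :: "nat \<Rightarrow> 'a set \<Rightarrow> 'a set set \<Rightarrow> nat" where
  "smpk k V E = Inf {card FV + card FE | FV FE. FV \<subseteq> V \<and> FE \<subseteq> E \<and>
      \<not> has_pap_k k (V - FV) (del_edges FV FE E)}"

definition mp :: "'a set \<Rightarrow> 'a set set \<Rightarrow> nat" where
  "mp V E = Inf {card F | F. F \<subseteq> E \<and> \<not> has_pap V (E - F)}"

definition smp :: "'a set \<Rightarrow> 'a set set \<Rightarrow> nat" where
  "smp V E = Inf {card FV + card FE | FV FE. FV \<subseteq> V \<and> FE \<subseteq> E \<and>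
      \<not> has_pap (V - FV) (del_edges FV FE E)}"

end

theory Submission
  imports Defs
begin

text \<open>Let \<open>A, B\<close> be the colour classes. Summing the vertex sums of an integer \<open>k\<close>-matching over
  either class counts every edge once, so a perfect one forces \<open>k|A| = k|B|\<close> and an almost
  perfect one forces \<open>k|A| = k|B| + 1\<close>, impossible for \<open>k \<ge> 2\<close>; in particular there is none
  when \<open>|V|\<close> is odd. A perfect \<open>k\<close>-matching satisfies Hall's condition, as
  \<open>k|S| \<le> k|N(S)|\<close>, hence yields a perfect matching; conversely \<open>k\<close> times a perfect matching is
  a perfect \<open>k\<close>-matching, and for even \<open>|V|\<close> an almost perfect matching is perfect. Applied to
  every subgraph \<open>G - F\<close> this compares the preclusion numbers.\<close>

section \<open>Hall's marriage theorem\<close>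

lemma marriage_condition_Diff_critical:
  fixes N :: "'a \<Rightarrow> 'b set"
  assumes "finite A" and marriage: "\<And>T. T \<subseteq> A \<Longrightarrow> card T \<le> card (\<Union>(N ` T))"
    and "S \<subseteq> A" "S \<noteq> {}" and critical: "card (\<Union>(N ` S)) = card S"
    and T: "T \<subseteq> A - S"
  shows "card T \<le> card (\<Union>((\<lambda>x. N x - \<Union>(N ` S)) ` T))"
proof -
  have fin_TS: "finite (T \<union> S)"
    using assms(1,3) T by (meson Diff_subset finite_Un finite_subset)
  have card_TS: "card (T \<union> S) = card T + card S"
    using fin_TS T by (intro card_Un_disjoint) auto
  have le: "card (T \<union> S) \<le> card (\<Union>(N ` (T \<union> S)))"
    using T assms(3) by (intro marriage) auto
  moreover have "card (T \<union> S) > 0"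
    using fin_TS \<open>S \<noteq> {}\<close> by auto
  ultimately have fin: "finite (\<Union>(N ` (T \<union> S)))"
    by (metis card.infinite not_gr0 le_zero_eq)
  have "\<Union>((\<lambda>x. N x - \<Union>(N ` S)) ` T) = \<Union>(N ` (T \<union> S)) - \<Union>(N ` S)"
    by auto
  then have "card (\<Union>((\<lambda>x. N x - \<Union>(N ` S)) ` T)) = card (\<Union>(N ` (T \<union> S))) - card S"
    using critical fin by (simp add: card_Diff_subset finite_subset)
  then show ?thesis
    using le card_TS by linarith
qed

lemma marriage_condition_Diff_point:
  fixes N :: "'a \<Rightarrow> 'b set"
  assumes strict: "\<And>T. T \<subseteq> A \<Longrightarrow> T \<noteq> {} \<Longrightarrow> T \<noteq> A \<Longrightarrow> card T < card (\<Union>(N ` T))"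
    and "a \<in> A" and T: "T \<subseteq> A - {a}"
  shows "card T \<le> card (\<Union>((\<lambda>x. N x - {b}) ` T))"
proof (cases "T = {}")
  case False
  have "\<Union>((\<lambda>x. N x - {b}) ` T) = \<Union>(N ` T) - {b}"
    by auto
  moreover have "card T < card (\<Union>(N ` T))"
    using strict T False \<open>a \<in> A\<close> by blast
  ultimately show ?thesis
    by (simp add: card_Diff_singleton_if) linarith
qed simp

text \<open>Halmos--Vaughan induction: if some proper nonempty \<open>S\<close> is critical, match \<open>S\<close> inside
  \<open>N(S)\<close> and \<open>A - S\<close> outside it; otherwise every such \<open>S\<close> has a surplus neighbour, so any
  single edge can be fixed and the rest matched.\<close>
theorem Hall_marriage:
  fixes N :: "'a \<Rightarrow> 'b set"
  assumes "finite A" and "\<And>S. S \<subseteq> A \<Longrightarrow> card S \<le> card (\<Union>(N ` S))"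
  shows "\<exists>f. inj_on f A \<and> (\<forall>a\<in>A. f a \<in> N a)"
  using assms
proof (induction "card A" arbitrary: A N rule: less_induct)
  case less
  consider (empty) "A = {}"
    | (critical) S where "S \<subseteq> A" "S \<noteq> {}" "S \<noteq> A" "card (\<Union>(N ` S)) = card S"
    | (strict) a where "a \<in> A"
        "\<And>S. S \<subseteq> A \<Longrightarrow> S \<noteq> {} \<Longrightarrow> S \<noteq> A \<Longrightarrow> card S < card (\<Union>(N ` S))"
    using less.prems(2) by (metis all_not_in_conv le_neq_implies_less)
  then show ?case
  proof cases
    case empty
    then show ?thesis by simp
  next
    case critical
    have "finite S" "card S < card A" "finite (A - S)"
      using critical less.prems(1) by (auto simp: psubset_card_mono finite_subset)
    moreover have "card (A - S) < card A"
      using critical \<open>finite S\<close> \<open>card S < card A\<close> card_gt_0_iff[of S]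
      by (simp add: card_Diff_subset)
    moreover have "\<And>T. T \<subseteq> S \<Longrightarrow> card T \<le> card (\<Union>(N ` T))"
      using critical(1) less.prems(2) by auto
    ultimately obtain f1 where f1: "inj_on f1 S" "\<forall>a\<in>S. f1 a \<in> N a"
      using less.hyps by blast
    obtain f2 where f2: "inj_on f2 (A - S)" "\<forall>a\<in>A - S. f2 a \<in> N a - \<Union>(N ` S)"
      using less.hyps[OF \<open>card (A - S) < card A\<close> \<open>finite (A - S)\<close>]
        marriage_condition_Diff_critical[OF less.prems critical(1,2,4)] by blast
    define f where "f x = (if x \<in> S then f1 x else f2 x)" for x
    have "inj_on f S"
      using f1(1) inj_on_cong[of S f f1] by (simp add: f_def)
    moreover have "inj_on f (A - S)"
      using f2(1) inj_on_cong[of "A - S" f f2] by (simp add: f_def)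
    moreover have "f ` S \<subseteq> \<Union>(N ` S)" "f ` (A - S) \<inter> \<Union>(N ` S) = {}"
      using f1(2) f2(2) by (auto simp: f_def)
    ultimately have "inj_on f (S \<union> (A - S))"
      unfolding inj_on_Un by blast
    moreover have "S \<union> (A - S) = A"
      using critical(1) by blast
    moreover have "\<forall>a\<in>A. f a \<in> N a"
      using f1 f2 by (auto simp: f_def)
    ultimately show ?thesis
      by auto
  next
    case strict
    obtain b where b: "b \<in> N a"
      using less.prems(2)[of "{a}"] strict(1) by fastforce
    have "card (A - {a}) < card A" "finite (A - {a})"
      using card_Diff1_less[OF less.prems(1) strict(1)] less.prems(1) by auto
    then obtain f where f: "inj_on f (A - {a})" "\<forall>x\<in>A - {a}. f x \<in> N x - {b}"
      using less.hyps[of "A - {a}" "\<lambda>x. N x - {b}"]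
        marriage_condition_Diff_point[OF strict(2) strict(1)] by blast
    have "inj_on (f(a := b)) (insert a (A - {a}))"
      using f by (auto simp: inj_on_def)
    moreover have "\<forall>x\<in>A. (f(a := b)) x \<in> N x"
      using f b by auto
    ultimately show ?thesis
      using strict(1) by (metis insert_Diff)
  qed
qed

section \<open>Integer k-matchings of bipartite graphs\<close>

lemma even_card_Union_matching:
  assumes "matching E M" and "\<And>e. e \<in> E \<Longrightarrow> card e = 2"
  shows "even (card (\<Union>M))"
proof -
  have card_M: "\<And>e. e \<in> M \<Longrightarrow> card e = 2"
    using assms unfolding matching_def by auto
  have "pairwise disjnt M"
    using assms(1) unfolding matching_def pairwise_def disjnt_def by blast
  moreover have "\<And>e. e \<in> M \<Longrightarrow> finite e"
    using card_M by (metis card.infinite zero_neq_numeral)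
  ultimately have "card (\<Union>M) = (\<Sum>e\<in>M. card e)"
    by (rule card_Union_disjoint)
  also have "\<dots> = (\<Sum>e\<in>M. 2)"
    using card_M by simp
  finally show ?thesis
    by simp
qed

lemma perfect_int_k_matching_of_perfect_matching:
  assumes "finite E" and "matching E M" and "\<Union>M = V"
  shows "perfect_int_k_matching k V E (\<lambda>e. if e \<in> M then k else 0)"
proof -
  have "sum (\<lambda>e. if e \<in> M then k else 0) (inc E v) = k" if "v \<in> V" for v
  proof -
    obtain e where e: "e \<in> M" "v \<in> e"
      using \<open>v \<in> V\<close> assms(3) by auto
    then have "inc E v \<inter> M = {e}"
      using assms(2) unfolding matching_def inc_def by blast
    moreover have "finite (inc E v)"
      using assms(1) unfolding inc_def by simp
    ultimately show ?thesis
      by (simp add: sum.If_cases)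
  qed
  then show ?thesis
    unfolding perfect_int_k_matching_def int_k_matching_def by auto
qed

definition neighbours :: "'a set set \<Rightarrow> 'a \<Rightarrow> 'a set" where
  "neighbours E a = {b. {a, b} \<in> E}"

locale bipartite_graph =
  fixes V :: "'a set" and E :: "'a set set" and A B :: "'a set"
  assumes finite_vertices: "finite V"
    and sides_Un: "A \<union> B = V" and sides_disjoint: "A \<inter> B = {}"
    and edge_subset: "e \<in> E \<Longrightarrow> e \<subseteq> V"
    and card_edge_Int_A: "e \<in> E \<Longrightarrow> card (e \<inter> A) = 1"
    and card_edge_Int_B: "e \<in> E \<Longrightarrow> card (e \<inter> B) = 1"
begin

lemma swap_sides: "bipartite_graph V E B A"
  by unfold_locales (use finite_vertices sides_Un sides_disjoint edge_subset card_edge_Int_A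
      card_edge_Int_B in auto)

lemma finite_A: "finite A" and finite_B: "finite B"
  using finite_vertices sides_Un by auto

lemma finite_edges: "finite E"
  using finite_vertices edge_subset by (meson PowI finite_Pow_iff finite_subset subsetI)

lemma edgeE:
  assumes "e \<in> E"
  obtains a b where "a \<in> A" "b \<in> B" "e = {a, b}"
proof -
  obtain a b where "e \<inter> A = {a}" "e \<inter> B = {b}"
    using card_edge_Int_A[OF assms] card_edge_Int_B[OF assms] by (metis One_nat_def card_1_singleton_iff)
  moreover have "e = e \<inter> A \<union> e \<inter> B"
    using edge_subset[OF assms] sides_Un by blast
  ultimately show thesis
    using that by blast
qed

lemma card_edge: "e \<in> E \<Longrightarrow> card e = 2"
  using sides_disjoint by (elim edgeE) (auto simp: card_insert_if disjoint_iff)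

lemma inc_disjoint:
  assumes "a \<in> A" "a' \<in> A" "a \<noteq> a'"
  shows "inc E a \<inter> inc E a' = {}"
  using assms sides_disjoint unfolding inc_def by (blast elim: edgeE)

lemma sum_inc_subset_A:
  assumes "X \<subseteq> A"
  shows "(\<Sum>v\<in>X. sum h (inc E v)) = sum h {e \<in> E. e \<inter> X \<noteq> {}}"
proof -
  have "finite X"
    using assms finite_A finite_subset by blast
  moreover have "\<forall>v\<in>X. finite (inc E v)"
    using finite_edges unfolding inc_def by simp
  moreover have "\<forall>v\<in>X. \<forall>v'\<in>X. v \<noteq> v' \<longrightarrow> inc E v \<inter> inc E v' = {}"
    using assms inc_disjoint by blast
  ultimately have "sum h (\<Union>(inc E ` X)) = (\<Sum>v\<in>X. sum h (inc E v))"
    by (rule sum.UNION_disjoint)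
  moreover have "\<Union>(inc E ` X) = {e \<in> E. e \<inter> X \<noteq> {}}"
    unfolding inc_def by blast
  ultimately show ?thesis
    by simp
qed

lemma sum_inc_A: "(\<Sum>v\<in>A. sum h (inc E v)) = sum h E"
proof -
  have "{e \<in> E. e \<inter> A \<noteq> {}} = E"
    by (blast elim: edgeE)
  then show ?thesis
    using sum_inc_subset_A[OF order_refl] by simp
qed

lemma deficient_vertex_not_in_A:
  fixes h :: "'a set \<Rightarrow> nat"
  assumes "k \<ge> 2" and full: "\<forall>v\<in>V - {v'}. sum h (inc E v) = k"
    and deficient: "sum h (inc E v') = k - 1"
  shows "v' \<notin> A"
proof
  assume "v' \<in> A"
  have "sum h E = (\<Sum>v\<in>A. sum h (inc E v))"
    by (rule sum_inc_A[symmetric])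
  also have "\<dots> = sum h (inc E v') + (\<Sum>v\<in>A - {v'}. sum h (inc E v))"
    by (rule sum.remove[OF finite_A \<open>v' \<in> A\<close>])
  also have "\<dots> = (k - 1) + (\<Sum>v\<in>A - {v'}. k)"
    using deficient full sides_Un by (auto intro!: sum.cong)
  also have "\<dots> = (k - 1) + k * (card A - 1)"
    using \<open>v' \<in> A\<close> finite_A by simp
  finally have sum_A: "sum h E = (k - 1) + k * (card A - 1)" .
  have "sum h E = (\<Sum>v\<in>B. sum h (inc E v))"
    by (rule bipartite_graph.sum_inc_A[OF swap_sides, symmetric])
  also have "\<dots> = (\<Sum>v\<in>B. k)"
    using full sides_Un sides_disjoint \<open>v' \<in> A\<close> by (intro sum.cong) auto
  also have "\<dots> = k * card B"
    by simp
  finally have "k * card A = k * card B + 1"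
    using sum_A \<open>k \<ge> 2\<close> \<open>v' \<in> A\<close> finite_A card_gt_0_iff[of A]
    by (cases "card A") (auto simp: algebra_simps)
  then have "k dvd 1"
    by (metis dvd_add_right_iff dvd_triv_left)
  with \<open>k \<ge> 2\<close> show False
    by simp
qed

lemma not_almost_perfect_int_k_matching:
  assumes "k \<ge> 2"
  shows "\<not> almost_perfect_int_k_matching k V E h"
proof
  assume "almost_perfect_int_k_matching k V E h"
  then obtain v' where "v' \<in> V" "sum h (inc E v') = k - 1" "\<forall>v\<in>V - {v'}. sum h (inc E v) = k"
    unfolding almost_perfect_int_k_matching_def by blast
  then show False
    using deficient_vertex_not_in_A[OF assms]
      bipartite_graph.deficient_vertex_not_in_A[OF swap_sides assms] sides_Un by blast
qed

lemma sum_perfect_int_k_matching: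
  assumes "perfect_int_k_matching k V E h"
  shows "sum h E = k * card A"
proof -
  have "sum h E = (\<Sum>v\<in>A. sum h (inc E v))"
    by (rule sum_inc_A[symmetric])
  also have "\<dots> = (\<Sum>v\<in>A. k)"
    using assms sides_Un unfolding perfect_int_k_matching_def by (intro sum.cong) auto
  finally show ?thesis
    by simp
qed

lemma perfect_int_k_matching_card_sides:
  assumes "k \<ge> 1" and "perfect_int_k_matching k V E h"
  shows "card A = card B"
  using sum_perfect_int_k_matching[OF assms(2)]
    bipartite_graph.sum_perfect_int_k_matching[OF swap_sides assms(2)] assms(1)
  by simp

lemma neighbours_subset_B:
  assumes "a \<in> A"
  shows "neighbours E a \<subseteq> B"
proof
  fix b assume "b \<in> neighbours E a"
  then obtain a' b' where "a' \<in> A" "b' \<in> B" "{a, b} = {a', b'}"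
    unfolding neighbours_def by (metis edgeE mem_Collect_eq)
  then show "b \<in> B"
    using assms sides_disjoint by (auto simp: doubleton_eq_iff)
qed

text \<open>Every edge at S ends in N(S), so k|S| = h(edges at S) \<le> h(edges at N(S)) = k|N(S)|.\<close>
lemma perfect_int_k_matching_marriage_condition:
  assumes "k \<ge> 1" and perfect: "perfect_int_k_matching k V E h" and "S \<subseteq> A"
  shows "card S \<le> card (\<Union>(neighbours E ` S))"
proof -
  define T where "T = \<Union>(neighbours E ` S)"
  have "T \<subseteq> B"
    using neighbours_subset_B \<open>S \<subseteq> A\<close> unfolding T_def by blast
  have degree: "sum h (inc E v) = k" if "v \<in> V" for v
    using perfect that unfolding perfect_int_k_matching_def by blast
  have edges_at_S: "{e \<in> E. e \<inter> S \<noteq> {}} \<subseteq> {e \<in> E. e \<inter> T \<noteq> {}}"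
  proof
    fix e assume "e \<in> {e \<in> E. e \<inter> S \<noteq> {}}"
    then obtain a b where "e \<in> E" "a \<in> A" "b \<in> B" "e = {a, b}" "e \<inter> S \<noteq> {}"
      by (blast elim: edgeE)
    then have "a \<in> S" "b \<in> neighbours E a"
      using \<open>S \<subseteq> A\<close> sides_disjoint unfolding neighbours_def by auto
    then show "e \<in> {e \<in> E. e \<inter> T \<noteq> {}}"
      using \<open>e \<in> E\<close> \<open>e = {a, b}\<close> unfolding T_def by blast
  qed
  have "k * card S = (\<Sum>v\<in>S. k)"
    by simp
  also have "\<dots> = (\<Sum>v\<in>S. sum h (inc E v))"
    using degree \<open>S \<subseteq> A\<close> sides_Un by (intro sum.cong) auto
  also have "\<dots> = sum h {e \<in> E. e \<inter> S \<noteq> {}}"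
    by (rule sum_inc_subset_A[OF \<open>S \<subseteq> A\<close>])
  also have "\<dots> \<le> sum h {e \<in> E. e \<inter> T \<noteq> {}}"
    using edges_at_S finite_edges by (intro sum_mono2) auto
  also have "\<dots> = (\<Sum>v\<in>T. sum h (inc E v))"
    by (rule bipartite_graph.sum_inc_subset_A[OF swap_sides \<open>T \<subseteq> B\<close>, symmetric])
  also have "\<dots> = (\<Sum>v\<in>T. k)"
    using degree \<open>T \<subseteq> B\<close> sides_Un by (intro sum.cong) auto
  also have "\<dots> = k * card T"
    by simp
  finally show ?thesis
    using \<open>k \<ge> 1\<close> unfolding T_def by simp
qed

lemma perfect_matching_of_perfect_int_k_matching:
  assumes "k \<ge> 1" and perfect: "perfect_int_k_matching k V E h"
  obtains M where "matching E M" "\<Union>M = V"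
proof -
  obtain f where f: "inj_on f A" "\<forall>a\<in>A. f a \<in> neighbours E a"
    using Hall_marriage[OF finite_A perfect_int_k_matching_marriage_condition[OF assms]] by blast
  have "f ` A \<subseteq> B"
    using f(2) neighbours_subset_B by blast
  moreover have "card (f ` A) = card B"
    using card_image[OF f(1)] perfect_int_k_matching_card_sides[OF assms] by simp
  ultimately have "f ` A = B"
    using finite_B by (simp add: card_subset_eq)
  define M where "M = (\<lambda>a. {a, f a}) ` A"
  have "matching E M"
    unfolding matching_def
  proof (intro conjI ballI impI)
    show "M \<subseteq> E"
      using f(2) unfolding M_def neighbours_def by auto
  next
    fix e e' assume "e \<in> M" "e' \<in> M" "e \<noteq> e'"
    then obtain a a' where "a \<in> A" "a' \<in> A" "a \<noteq> a'" "e = {a, f a}" "e' = {a', f a'}"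
      unfolding M_def by auto
    moreover have "f a \<noteq> f a'" "f a \<in> B" "f a' \<in> B"
      using calculation f(1) \<open>f ` A = B\<close> by (auto dest: inj_onD)
    ultimately show "e \<inter> e' = {}"
      using sides_disjoint by auto
  qed
  moreover have "\<Union>M = V"
    using \<open>f ` A = B\<close> sides_Un unfolding M_def by auto
  ultimately show thesis
    by (rule that)
qed

lemma has_pap_of_has_pap_k:
  assumes "k \<ge> 2" and "has_pap_k k V E"
  shows "has_pap V E"
proof -
  obtain h where "perfect_int_k_matching k V E h"
    using assms not_almost_perfect_int_k_matching unfolding has_pap_k_def by blast
  then obtain M where "matching E M" "\<Union>M = V"
    using perfect_matching_of_perfect_int_k_matching \<open>k \<ge> 2\<close> by (metis one_le_numeral order_trans)
  then show ?thesis
    unfolding has_pap_def by blast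
qed

lemma has_pap_k_of_has_pap:
  assumes "even (card V)" and "has_pap V E"
  shows "has_pap_k k V E"
proof -
  obtain M where M: "matching E M" "\<Union>M = V \<or> card (V - \<Union>M) = 1"
    using assms(2) unfolding has_pap_def by blast
  have "\<Union>M \<subseteq> V"
    using M(1) edge_subset unfolding matching_def by blast
  then have "card V = card (\<Union>M) + card (V - \<Union>M)"
    using finite_vertices by (metis card_Diff_subset card_mono finite_subset le_add_diff_inverse)
  then have "\<Union>M = V"
    using M(2) assms(1) even_card_Union_matching[OF M(1) card_edge] by auto
  then show ?thesis
    using perfect_int_k_matching_of_perfect_matching[OF finite_edges M(1)]
    unfolding has_pap_k_def by blast
qed

lemma not_has_pap_k_if_odd:
  assumes "k \<ge> 2" and "odd (card V)"
  shows "\<not> has_pap_k k V E"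
proof
  assume "has_pap_k k V E"
  then obtain h where "perfect_int_k_matching k V E h"
    using assms(1) not_almost_perfect_int_k_matching unfolding has_pap_k_def by blast
  then have "card A = card B"
    by (rule perfect_int_k_matching_card_sides[rotated]) (use \<open>k \<ge> 2\<close> in simp)
  moreover have "card V = card A + card B"
    using sides_Un sides_disjoint finite_A finite_B by (metis card_Un_disjoint)
  ultimately show False
    using assms(2) by simp
qed

lemma subgraph_del_edges: "bipartite_graph (V - FV) (del_edges FV FE E) (A - FV) (B - FV)"
proof -
  have "e \<inter> (A - FV) = e \<inter> A" "e \<inter> (B - FV) = e \<inter> B" "e \<subseteq> V - FV"
    if "e \<in> del_edges FV FE E" for e
    using that edge_subset unfolding del_edges_def by auto
  then show ?thesis
    using finite_vertices sides_Un sides_disjoint card_edge_Int_A card_edge_Int_B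
    by unfold_locales (auto simp: del_edges_def)
qed

lemma subgraph_Diff_edges: "bipartite_graph V (E - F) A B"
  using subgraph_del_edges[of "{}" F] unfolding del_edges_def by (simp add: set_diff_eq)

end

lemma bipartite_graphI:
  assumes "simple_graph V E" and "bipartite V E"
  obtains A B where "bipartite_graph V E A B"
proof -
  obtain A B where "A \<union> B = V" "A \<inter> B = {}" "\<forall>e\<in>E. card (e \<inter> A) = 1 \<and> card (e \<inter> B) = 1"
    using assms(2) unfolding bipartite_def by blast
  moreover have "finite V" "\<forall>e\<in>E. e \<subseteq> V"
    using assms(1) unfolding simple_graph_def by auto
  ultimately have "bipartite_graph V E A B"
    by unfold_locales auto
  then show thesis
    by (rule that)
qed

section \<open>Matching preclusion numbers\<close>

lemma mpk_eq_0: "\<not> has_pap_k k V E \<Longrightarrow> mpk k V E = 0"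
  unfolding mpk_def by (rule cInf_eq_minimum) force+

lemma smpk_eq_0:
  assumes "\<not> has_pap_k k V E"
  shows "smpk k V E = 0"
proof -
  have "del_edges {} {} E = E"
    unfolding del_edges_def by simp
  with assms show ?thesis
    unfolding smpk_def by (intro cInf_eq_minimum) force+
qed

text \<open>Both minima range over the empty set here; since \<open>Inf {}\<close> is an unspecified natural
  number (not 0), equality is the best one can say.\<close>
lemma smpk_eq_smp_empty_vertices: "smpk k {} E = smp {} E"
proof -
  have "has_pap_k k {} E'" for E' :: "'a set set"
    unfolding has_pap_k_def perfect_int_k_matching_def int_k_matching_def by auto
  moreover have "has_pap {} E'" for E' :: "'a set set"
    unfolding has_pap_def matching_def by auto
  ultimately show ?thesis
    unfolding smpk_def smp_def by simp
qed

lemma mpk_eq_mp: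
  assumes "\<And>F. F \<subseteq> E \<Longrightarrow> has_pap_k k V (E - F) \<longleftrightarrow> has_pap V (E - F)"
  shows "mpk k V E = mp V E"
  unfolding mpk_def mp_def using assms by (metis (no_types, lifting))

lemma smpk_le_smp:
  assumes "card V \<ge> 2"
    and "\<And>FV FE. FV \<subseteq> V \<Longrightarrow> FE \<subseteq> E \<Longrightarrow>
      has_pap_k k (V - FV) (del_edges FV FE E) \<Longrightarrow> has_pap (V - FV) (del_edges FV FE E)"
  shows "smpk k V E \<le> smp V E"
proof -
  let ?S = "{card FV + card FE |FV FE. FV \<subseteq> V \<and> FE \<subseteq> E \<and>
      \<not> has_pap (V - FV) (del_edges FV FE E)}"
  let ?Sk = "{card FV + card FE |FV FE. FV \<subseteq> V \<and> FE \<subseteq> E \<and>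
      \<not> has_pap_k k (V - FV) (del_edges FV FE E)}"
  have "?S \<subseteq> ?Sk"
    by (auto dest: assms(2))
  moreover have "card E \<in> ?S"
  proof -
    have "\<not> has_pap (V - {}) (del_edges {} E E)"
      using assms(1) unfolding has_pap_def matching_def del_edges_def by auto
    then show ?thesis
      by (intro CollectI exI[of _ "{}"] exI[of _ E]) simp
  qed
  ultimately have "Inf ?Sk \<le> Inf ?S"
    by (intro cInf_superset_mono) auto
  then show ?thesis
    unfolding smpk_def smp_def .
qed

theorem theorem3p13:
  fixes k :: nat and V :: "'a set" and E :: "'a set set"
  assumes "odd k" and "k \<ge> 3"
    and "simple_graph V E" and "bipartite V E"
  shows "(odd (card V) \<longrightarrow> mpk k V E = 0 \<and> smpk k V E = 0) \<and>
         (even (card V) \<longrightarrow> mpk k V E = mp V E \<and> smpk k V E \<le> smp V E)"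
proof -
  obtain A B where "bipartite_graph V E A B"
    using bipartite_graphI[OF assms(3,4)] .
  then interpret G: bipartite_graph V E A B .
  have "k \<ge> 2"
    using assms(2) by simp
  have "mpk k V E = 0 \<and> smpk k V E = 0" if "odd (card V)"
    using G.not_has_pap_k_if_odd[OF \<open>k \<ge> 2\<close> that] mpk_eq_0 smpk_eq_0 by blast
  moreover have "mpk k V E = mp V E" if "even (card V)"
    using bipartite_graph.has_pap_of_has_pap_k[OF G.subgraph_Diff_edges \<open>k \<ge> 2\<close>]
      bipartite_graph.has_pap_k_of_has_pap[OF G.subgraph_Diff_edges that]
    by (intro mpk_eq_mp) blast
  moreover have "smpk k V E \<le> smp V E" if "even (card V)"
  proof (cases "V = {}")
    case False
    then have "card V \<noteq> 0"
      using G.finite_vertices by simp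
    with that have "card V \<ge> 2"
      by presburger
    then show ?thesis
      using bipartite_graph.has_pap_of_has_pap_k[OF G.subgraph_del_edges \<open>k \<ge> 2\<close>]
      by (intro smpk_le_smp) blast
  qed (simp add: smpk_eq_smp_empty_vertices)
  ultimately show ?thesis
    by blast
qed

end
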